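(* Let $P$ be a finite poset, $R$ a commutative unital ring, and $D$ a derivation of $I^3(P,R)$. Then for all $x<y$ in $P$, $$D(e_{xyy})=\sum_{v\in P,\ y<v}D(e_y)(y,y,v)\,e_{xyv}+\sum_{u\in P,\ u\le y}D(e_{xyy})(u,y,y)\,e_{uyy},$$ $$D(e_{xxy})=\sum_{v\in P,\ x\le v}D(e_{xxy})(x,x,v)\,e_{xxv}+\sum_{u\in P,\ u<x}D(e_x)(u,x,x)\,e_{uxy}.$$
   Context: For a finite poset $P$, $P^3_\le=\{(x,y,z)\in P^3: x\le y\le z\}$, and $I^3(P,R)$ is the $R$-module of functions $f:P^3_\le\to R$ with multiplication $(fg)(x_1,x_2,x_3)=\sum f(x_1,y_1,y_2)g(y_1,y_2,x_3)$ over all $x_1\le y_1\le x_2\le y_2\le x_3$. For $x\le y\le z$, $e_{xyz}$ is the function equal to $1$ at $(x,y,z)$ and $0$ elsewhere, and $e_x:=e_{xxx}$. A derivation is an $R$-linear map $D:I^3(P,R)\to I^3(P,R)$ with $D(fg)=D(f)g+fD(g)$. *)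

theory Defs
  imports Main
begin

text \<open>The finite poset P is the finite ordered type 'a. Elements of I^3(P,R) are functions
  'a \<Rightarrow> 'a \<Rightarrow> 'a \<Rightarrow> 'r vanishing outside P^3_le = {(x,y,z). x \<le> y \<le> z}.\<close>

type_synonym ('a, 'r) inc3 = "'a \<Rightarrow> 'a \<Rightarrow> 'a \<Rightarrow> 'r"

definition I3 :: "('a::{finite,order}, 'r::comm_ring_1) inc3 set" where
  "I3 = {f. \<forall>x y z. \<not> (x \<le> y \<and> y \<le> z) \<longrightarrow> f x y z = 0}"

definition mult3 :: "('a::{finite,order}, 'r::comm_ring_1) inc3 \<Rightarrow> ('a, 'r) inc3 \<Rightarrow> ('a, 'r) inc3" where
  "mult3 f g = (\<lambda>x1 x2 x3. \<Sum>(y1, y2) \<in> {(y1, y2). x1 \<le> y1 \<and> y1 \<le> x2 \<and> x2 \<le> y2 \<and> y2 \<le> x3}.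
       f x1 y1 y2 * g y1 y2 x3)"

definition e3 :: "'a \<Rightarrow> 'a \<Rightarrow> 'a \<Rightarrow> ('a::{finite,order}, 'r::comm_ring_1) inc3" where
  "e3 x y z = (\<lambda>a b c. if a = x \<and> b = y \<and> c = z then 1 else 0)"

definition derivation3 :: "(('a::{finite,order}, 'r::comm_ring_1) inc3 \<Rightarrow> ('a, 'r) inc3) \<Rightarrow> bool" where
  "derivation3 D \<longleftrightarrow>
     (\<forall>f \<in> I3. D f \<in> I3) \<and>
     (\<forall>f \<in> I3. \<forall>g \<in> I3. D (\<lambda>a b c. f a b c + g a b c) = (\<lambda>a b c. D f a b c + D g a b c)) \<and>
     (\<forall>r. \<forall>f \<in> I3. D (\<lambda>a b c. r * f a b c) = (\<lambda>a b c. r * D f a b c)) \<and>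
     (\<forall>f \<in> I3. \<forall>g \<in> I3. D (mult3 f g) = (\<lambda>a b c. mult3 (D f) g a b c + mult3 f (D g) a b c))"

end

theory Submission
  imports Defs
begin

text \<open>Since e_xyy = e_xyy e_y and e_xxy = e_x e_xxy, the Leibniz rule writes D(e_xyy) and D(e_xxy)
  as sums of two products with a basis element; each such product merely copies one row or
  column of the other factor. The only overlap of the two contributions is the entry
  D(e_y)(y,y,y), which vanishes because applying the Leibniz rule to e_y = e_y e_y gives
  D(e_y)(y,y,y) = 2 D(e_y)(y,y,y).\<close>

lemma e3_in_I3: "x \<le> y \<Longrightarrow> y \<le> z \<Longrightarrow> e3 x y z \<in> I3"
  by (auto simp: I3_def e3_def)

lemma e3_apply: "e3 x y z a b c = (if a = x \<and> b = y \<and> c = z then 1 else 0)"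
  by (simp add: e3_def)

lemma derivation3_mult3:
  assumes "derivation3 D" and "f \<in> I3" and "g \<in> I3"
  shows "D (mult3 f g) = (\<lambda>a b c. mult3 (D f) g a b c + mult3 f (D g) a b c)"
  using assms unfolding derivation3_def by blast

lemma mult3_e3_right:
  fixes f :: "('a::{finite,order}, 'r::comm_ring_1) inc3"
  assumes "x \<le> y"
  shows "mult3 f (e3 x x y) a b c = (if a \<le> x \<and> b = x \<and> c = y then f a x x else 0)"
proof -
  have "mult3 f (e3 x x y) a b c =
      (\<Sum>p \<in> {(y1, y2). a \<le> y1 \<and> y1 \<le> b \<and> b \<le> y2 \<and> y2 \<le> c}.
         if p = (x, x) then (if c = y then f a x x else 0) else 0)"
    unfolding mult3_def e3_def by (rule sum.cong) (auto split: if_splits)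
  also have "\<dots> = (if a \<le> x \<and> b = x \<and> c = y then f a x x else 0)"
    using assms by (auto simp: sum.delta')
  finally show ?thesis .
qed

lemma mult3_e3_left:
  fixes g :: "('a::{finite,order}, 'r::comm_ring_1) inc3"
  assumes "x \<le> y"
  shows "mult3 (e3 x y y) g a b c = (if a = x \<and> b = y \<and> y \<le> c then g y y c else 0)"
proof -
  have "mult3 (e3 x y y) g a b c =
      (\<Sum>p \<in> {(y1, y2). a \<le> y1 \<and> y1 \<le> b \<and> b \<le> y2 \<and> y2 \<le> c}.
         if p = (y, y) then (if a = x then g y y c else 0) else 0)"
    unfolding mult3_def e3_def by (rule sum.cong) (auto split: if_splits)
  also have "\<dots> = (if a = x \<and> b = y \<and> y \<le> c then g y y c else 0)"
    using assms by (auto simp: sum.delta')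
  finally show ?thesis .
qed

lemma mult3_e3_diag_right:
  "x \<le> y \<Longrightarrow> mult3 (e3 x y y) (e3 y y y) = (e3 x y y :: ('a::{finite,order}, 'r::comm_ring_1) inc3)"
  by (intro ext) (auto simp: mult3_e3_left e3_apply)

lemma mult3_e3_diag_left:
  "x \<le> y \<Longrightarrow> mult3 (e3 x x x) (e3 x x y) = (e3 x x y :: ('a::{finite,order}, 'r::comm_ring_1) inc3)"
  by (intro ext) (auto simp: mult3_e3_right e3_apply)

lemma sum_times_e3_first:
  fixes h :: "'a::{finite,order} \<Rightarrow> 'r::comm_ring_1"
  shows "(\<Sum>u \<in> S. h u * e3 u y z a b c) = (if a \<in> S \<and> b = y \<and> c = z then h a else 0)"
proof -
  have "(\<Sum>u \<in> S. h u * e3 u y z a b c) = (\<Sum>u \<in> S. if u = a then (if b = y \<and> c = z then h a else 0) else 0)"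
    by (rule sum.cong) (auto simp: e3_apply)
  then show ?thesis by (simp add: sum.delta')
qed

lemma sum_times_e3_last:
  fixes h :: "'a::{finite,order} \<Rightarrow> 'r::comm_ring_1"
  shows "(\<Sum>v \<in> S. h v * e3 x y v a b c) = (if c \<in> S \<and> a = x \<and> b = y then h c else 0)"
proof -
  have "(\<Sum>v \<in> S. h v * e3 x y v a b c) = (\<Sum>v \<in> S. if v = c then (if a = x \<and> b = y then h c else 0) else 0)"
    by (rule sum.cong) (auto simp: e3_apply)
  then show ?thesis by (simp add: sum.delta')
qed

lemma derivation3_diag_e3:
  fixes D :: "('a::{finite,order}, 'r::comm_ring_1) inc3 \<Rightarrow> ('a, 'r) inc3"
  assumes "derivation3 D"
  shows "D (e3 y y y) y y y = 0"
proof -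
  have "D (e3 y y y) y y y = D (mult3 (e3 y y y) (e3 y y y)) y y y"
    by (simp add: mult3_e3_diag_right)
  also have "\<dots> = mult3 (D (e3 y y y)) (e3 y y y) y y y + mult3 (e3 y y y) (D (e3 y y y)) y y y"
    using assms by (simp add: derivation3_mult3 e3_in_I3)
  also have "\<dots> = D (e3 y y y) y y y + D (e3 y y y) y y y"
    by (simp add: mult3_e3_left mult3_e3_right)
  finally show ?thesis by simp
qed

lemma derivation3_e3_xyy:
  fixes D :: "('a::{finite,order}, 'r::comm_ring_1) inc3 \<Rightarrow> ('a, 'r) inc3"
  assumes "derivation3 D" and "x \<le> y"
  shows "D (e3 x y y) = (\<lambda>a b c.
            (\<Sum>v \<in> {v. y < v}. D (e3 y y y) y y v * e3 x y v a b c)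
          + (\<Sum>u \<in> {u. u \<le> y}. D (e3 x y y) u y y * e3 u y y a b c))"
proof (intro ext)
  fix a b c
  have "D (e3 x y y) a b c = D (mult3 (e3 x y y) (e3 y y y)) a b c"
    using assms(2) by (simp add: mult3_e3_diag_right)
  also have "\<dots> = mult3 (D (e3 x y y)) (e3 y y y) a b c + mult3 (e3 x y y) (D (e3 y y y)) a b c"
    using assms by (simp add: derivation3_mult3 e3_in_I3)
  also have "\<dots> = (if a \<le> y \<and> b = y \<and> c = y then D (e3 x y y) a y y else 0)
                 + (if a = x \<and> b = y \<and> y \<le> c then D (e3 y y y) y y c else 0)"
    using assms(2) by (simp add: mult3_e3_left mult3_e3_right)
  also have "\<dots> = (\<Sum>v \<in> {v. y < v}. D (e3 y y y) y y v * e3 x y v a b c)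
                 + (\<Sum>u \<in> {u. u \<le> y}. D (e3 x y y) u y y * e3 u y y a b c)"
    using assms(1) by (auto simp: sum_times_e3_first sum_times_e3_last derivation3_diag_e3
        order.order_iff_strict)
  finally show "D (e3 x y y) a b c = \<dots>" .
qed

lemma derivation3_e3_xxy:
  fixes D :: "('a::{finite,order}, 'r::comm_ring_1) inc3 \<Rightarrow> ('a, 'r) inc3"
  assumes "derivation3 D" and "x \<le> y"
  shows "D (e3 x x y) = (\<lambda>a b c.
            (\<Sum>v \<in> {v. x \<le> v}. D (e3 x x y) x x v * e3 x x v a b c)
          + (\<Sum>u \<in> {u. u < x}. D (e3 x x x) u x x * e3 u x y a b c))"
proof (intro ext)
  fix a b c
  have "D (e3 x x y) a b c = D (mult3 (e3 x x x) (e3 x x y)) a b c"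
    using assms(2) by (simp add: mult3_e3_diag_left)
  also have "\<dots> = mult3 (D (e3 x x x)) (e3 x x y) a b c + mult3 (e3 x x x) (D (e3 x x y)) a b c"
    using assms by (simp add: derivation3_mult3 e3_in_I3)
  also have "\<dots> = (if a \<le> x \<and> b = x \<and> c = y then D (e3 x x x) a x x else 0)
                 + (if a = x \<and> b = x \<and> x \<le> c then D (e3 x x y) x x c else 0)"
    using assms(2) by (simp add: mult3_e3_left mult3_e3_right)
  also have "\<dots> = (\<Sum>v \<in> {v. x \<le> v}. D (e3 x x y) x x v * e3 x x v a b c)
                 + (\<Sum>u \<in> {u. u < x}. D (e3 x x x) u x x * e3 u x y a b c)"
    using assms(1) by (auto simp: sum_times_e3_first sum_times_e3_last derivation3_diag_e3
        order.order_iff_strict)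
  finally show "D (e3 x x y) a b c = \<dots>" .
qed

theorem lemma4p2:
  fixes D :: "('a::{finite,order}, 'r::comm_ring_1) inc3 \<Rightarrow> ('a, 'r) inc3"
    and x y :: 'a
  assumes "derivation3 D" and "x < y"
  shows "(D (e3 x y y) = (\<lambda>a b c.
            (\<Sum>v \<in> {v. y < v}. D (e3 y y y) y y v * e3 x y v a b c)
          + (\<Sum>u \<in> {u. u \<le> y}. D (e3 x y y) u y y * e3 u y y a b c))) \<and>
         (D (e3 x x y) = (\<lambda>a b c.
            (\<Sum>v \<in> {v. x \<le> v}. D (e3 x x y) x x v * e3 x x v a b c)
          + (\<Sum>u \<in> {u. u < x}. D (e3 x x x) u x x * e3 u x y a b c)))"
  using assms derivation3_e3_xyy derivation3_e3_xxy less_imp_le by blast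

end
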